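(* Let $a=p^\gamma$ where $p$ is an odd prime and $\gamma\ge1$. Let $G=(\mathbb{Z}/a\mathbb{Z})^*$ and let $H$ be the maximal subgroup of $G$ of odd order (equivalently, the unique maximal subgroup of $G$ not containing the class of $-1$). Then \[ \{n\in\mathbb{N}:\ \text{every prime } q \text{ dividing } n \text{ satisfies } q \bmod a\in H\}\subseteq\mathcal{E}^*_a . \]
   Context: For a positive integer $n$, let $R(n;a)$ be the number of pairs $(x,y)$ of positive integers with $\frac{a}{n}=\frac1x+\frac1y$. Let $\mathcal{E}^*_a=\{n\in\mathbb{N}: R(n;a)=0,\ \gcd(n,a)=1\}$. If $\phi(a)=2^m d$ with $d$ odd and $g$ is a primitive root modulo $a$, then $H=\{g^{2^m j}:1\le j\le d\}$, of index $2^m$ in $G$. *)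

theory Defs
  imports "HOL-Number_Theory.Number_Theory"
begin

definition R :: "nat \<Rightarrow> nat \<Rightarrow> nat" where
  "R n a = card {(x, y). x > (0::nat) \<and> y > (0::nat) \<and>
      (of_nat a / of_nat n :: rat) = 1 / of_nat x + 1 / of_nat y}"

definition Estar :: "nat \<Rightarrow> nat set" where
  "Estar a = {n. n > 0 \<and> R n a = 0 \<and> gcd n a = 1}"

definition Hsub :: "nat \<Rightarrow> nat \<Rightarrow> nat set" where
  "Hsub a g = (let m = multiplicity 2 (totient a); d = totient a div 2 ^ m
               in {g ^ (2 ^ m * j) mod a | j. 1 \<le> j \<and> j \<le> d})"

end

theory Submission
  imports Defs
begin

text \<open>Let \<open>d\<close> be the odd part of \<open>\<phi>(a)\<close>. Every element of \<open>H\<close> satisfies \<open>h\<^sup>d = 1\<close>, and this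
  passes from the prime factors of \<open>n\<close> to every divisor of \<open>n\<close>; in particular \<open>n\<^sup>d \<equiv> 1\<close>, so
  \<open>n\<close> is prime to \<open>a\<close>. If \<open>a/n = 1/x + 1/y\<close>, cancelling \<open>gcd(x, y)\<close> produces divisors \<open>X, Y\<close>
  of \<open>n\<close> with \<open>a \<bar> X + Y\<close>. Raising \<open>X \<equiv> -Y (mod a)\<close> to the odd power \<open>d\<close> gives
  \<open>1 \<equiv> -1 (mod a)\<close>, impossible for \<open>a > 2\<close>.\<close>

definition odd_part :: "nat \<Rightarrow> nat" where
  "odd_part n = n div 2 ^ multiplicity 2 n"

lemma odd_odd_part: "n > 0 \<Longrightarrow> odd (odd_part n)"
  unfolding odd_part_def by (rule multiplicity_decompose) auto

lemma two_power_mult_odd_part: "2 ^ multiplicity 2 n * odd_part n = n"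
  unfolding odd_part_def by (rule dvd_mult_div_cancel[OF multiplicity_dvd])

lemma Hsub_power_odd_part_cong_1:
  assumes "residue_primroot a g" and "q mod a \<in> Hsub a g"
  shows "[q ^ odd_part (totient a) = 1] (mod a)"
proof -
  define m d where "m = multiplicity 2 (totient a)" and "d = odd_part (totient a)"
  obtain j where "q mod a = g ^ (2 ^ m * j) mod a"
    using assms(2) unfolding Hsub_def Let_def m_def odd_part_def by auto
  then have "[q ^ d = (g ^ (2 ^ m * j)) ^ d] (mod a)"
    by (intro cong_pow) (simp add: cong_def)
  also have "(g ^ (2 ^ m * j)) ^ d = (g ^ totient a) ^ j"
    using two_power_mult_odd_part[of "totient a"]
    by (simp add: m_def d_def flip: power_mult) (simp add: ac_simps)
  also have "[(g ^ totient a) ^ j = 1 ^ j] (mod a)"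
    using assms(1) by (intro cong_pow euler_theorem) (simp add: residue_primroot_def coprime_commute)
  finally show ?thesis
    by (simp add: d_def)
qed

lemma power_cong_1_if_prime_factors_power_cong_1:
  fixes n a d :: nat
  assumes "n > 0" and "\<And>q. prime q \<Longrightarrow> q dvd n \<Longrightarrow> [q ^ d = 1] (mod a)"
  shows "[n ^ d = 1] (mod a)"
  using assms
proof (induction n rule: less_induct)
  case (less n)
  show ?case
  proof (cases "n = 1")
    case False
    then obtain q k where q: "prime q" and n: "n = q * k"
      using prime_factor_nat by (metis dvdE)
    have "k > 0" and "k < n"
      using less.prems(1) n prime_gt_1_nat[OF q] by auto
    have k: "[k ^ d = 1] (mod a)"
    proof (rule less.IH[OF \<open>k < n\<close> \<open>k > 0\<close>])
      show "[r ^ d = 1] (mod a)" if "prime r" and "r dvd k" for r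
        using that less.prems(2) n by simp
    qed
    moreover have q: "[q ^ d = 1] (mod a)"
      using less.prems(2) n q by simp
    ultimately show ?thesis
      using cong_mult[OF q k] by (simp add: n power_mult_distrib)
  qed simp
qed

lemma Hsub_divisor_power_odd_part_cong_1:
  assumes "residue_primroot a g" and "n > 0"
    and H: "\<And>q. prime q \<Longrightarrow> q dvd n \<Longrightarrow> q mod a \<in> Hsub a g" and "x dvd n"
  shows "[x ^ odd_part (totient a) = 1] (mod a)"
proof (rule power_cong_1_if_prime_factors_power_cong_1)
  show "x > 0"
    using \<open>x dvd n\<close> \<open>n > 0\<close> by (rule dvd_pos_nat[rotated])
  show "[q ^ odd_part (totient a) = 1] (mod a)" if "prime q" and "q dvd x" for q
    using assms(1) H[OF \<open>prime q\<close> dvd_trans[OF \<open>q dvd x\<close> \<open>x dvd n\<close>]]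
    by (rule Hsub_power_odd_part_cong_1)
qed

lemma coprime_mult_add:
  fixes X Y :: nat
  assumes "coprime X Y"
  shows "coprime (X * Y) (X + Y)"
proof -
  have gcd_XY: "gcd X Y = 1"
    using assms by (rule coprime_imp_gcd_eq_1)
  have "coprime X (X + Y)"
    by (rule gcd_eq_1_imp_coprime) (simp add: gcd_XY)
  moreover have "coprime Y (X + Y)"
    by (rule gcd_eq_1_imp_coprime) (metis gcd_add2 gcd.commute add.commute gcd_XY)
  ultimately show ?thesis
    by simp
qed

lemma unit_fraction_sum_divisors:
  fixes a n x y :: nat
  assumes "x > 0" and "y > 0" and eq: "a * x * y = n * (x + y)" and "coprime n a"
  obtains X Y where "X dvd n" and "Y dvd n" and "a dvd X + Y"
proof -
  define c where "c = gcd x y"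
  obtain X Y where x: "x = X * c" and y: "y = Y * c" and "coprime X Y"
    using gcd_coprime_exists[of x y] assms(1) unfolding c_def by auto
  have "c > 0"
    using assms(1) unfolding c_def by simp
  moreover have "c * (a * X * Y * c) = c * (n * (X + Y))"
    using eq by (simp add: x y algebra_simps)
  ultimately have eq': "a * X * Y * c = n * (X + Y)"
    by simp
  have "coprime (X * Y) (X + Y)"
    using \<open>coprime X Y\<close> by (rule coprime_mult_add)
  moreover have "X * Y dvd n * (X + Y)"
    using eq' by (metis dvd_triv_left mult.assoc mult.commute)
  ultimately obtain t where t: "n = X * Y * t"
    using coprime_dvd_mult_left_iff by (metis dvdE)
  have "X * Y > 0"
    using x y assms(1,2) by auto
  moreover have "X * Y * (a * c) = X * Y * (t * (X + Y))"
    using eq' t by (simp add: algebra_simps)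
  ultimately have "a * c = t * (X + Y)"
    by simp
  moreover have "coprime a t"
    using \<open>coprime n a\<close> t by (simp add: coprime_commute)
  ultimately have "a dvd X + Y"
    by (metis coprime_dvd_mult_right_iff dvd_triv_left)
  moreover have "X dvd n" and "Y dvd n"
    using t by simp_all
  ultimately show ?thesis
    using that by blast
qed

lemma R_eq_0I:
  assumes "n > 0" and "\<And>x y. x > 0 \<Longrightarrow> y > 0 \<Longrightarrow> a * x * y \<noteq> n * (x + y)"
  shows "R n a = 0"
proof -
  have "a * x * y = n * (x + y)"
    if "x > 0" "y > 0" "(of_nat a / of_nat n :: rat) = 1 / of_nat x + 1 / of_nat y" for x y
  proof -
    have "(of_nat (a * x * y) :: rat) = of_nat (n * (x + y))"
      using that \<open>n > 0\<close> by (simp add: field_simps)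
    then show ?thesis
      by (simp only: of_nat_eq_iff)
  qed
  with assms(2) have "{(x, y). x > (0::nat) \<and> y > (0::nat) \<and>
      (of_nat a / of_nat n :: rat) = 1 / of_nat x + 1 / of_nat y} = {}"
    by blast
  then show ?thesis
    unfolding R_def by (simp only: card.empty)
qed

lemma not_dvd_sum_if_odd_power_cong_1:
  fixes a d X Y :: nat
  assumes "odd d" and "a > 2" and "[X ^ d = 1] (mod a)" and "[Y ^ d = 1] (mod a)"
  shows "\<not> a dvd X + Y"
proof
  assume "a dvd X + Y"
  then have "[int X = - int Y] (mod int a)"
    by (simp add: cong_iff_dvd_diff flip: int_dvd_int_iff)
  then have "[int X ^ d = (- int Y) ^ d] (mod int a)"
    by (rule cong_pow)
  then have "[int X ^ d = - (int Y ^ d)] (mod int a)"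
    using \<open>odd d\<close> by simp
  moreover have "[int X ^ d = 1] (mod int a)" and "[int Y ^ d = 1] (mod int a)"
    using assms(3,4) by (metis cong_int_iff of_nat_1 of_nat_power)+
  ultimately have "[1 = - 1] (mod int a)"
    by (meson cong_minus_minus_iff cong_sym cong_trans)
  then have "int a dvd 2"
    by (simp add: cong_iff_dvd_diff)
  with \<open>a > 2\<close> show False
    by (auto dest: zdvd_imp_le)
qed

lemma odd_prime_power_gt_2:
  fixes p k :: nat
  assumes "prime p" and "odd p" and "k \<ge> 1"
  shows "p ^ k > 2"
proof -
  have "p > 2"
    using assms(1,2) prime_ge_2_nat by (metis le_neq_implies_less even_numeral)
  moreover have "p ^ 1 \<le> p ^ k"
    using assms(3) prime_gt_0_nat[OF assms(1)] by (intro power_increasing) auto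
  ultimately show ?thesis
    by simp
qed

theorem lemma2p3:
  fixes p \<gamma> a g :: nat
  assumes "prime p" and "odd p" and "\<gamma> \<ge> 1" and "a = p ^ \<gamma>"
    and "residue_primroot a g"
  shows "{n. n > 0 \<and> (\<forall>q. prime q \<and> q dvd n \<longrightarrow> q mod a \<in> Hsub a g)} \<subseteq> Estar a"
proof
  fix n assume "n \<in> {n. n > 0 \<and> (\<forall>q. prime q \<and> q dvd n \<longrightarrow> q mod a \<in> Hsub a g)}"
  then have "n > 0" and H: "\<And>q. prime q \<Longrightarrow> q dvd n \<Longrightarrow> q mod a \<in> Hsub a g"
    by auto
  define d where "d = odd_part (totient a)"
  have "a > 2"
    using odd_prime_power_gt_2[OF assms(1-3)] assms(4) by simp
  then have "odd d"
    unfolding d_def by (intro odd_odd_part) simp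
  have divisor_cong: "[x ^ d = 1] (mod a)" if "x dvd n" for x
    unfolding d_def using assms(5) \<open>n > 0\<close> H that
    by (rule Hsub_divisor_power_odd_part_cong_1)
  have "coprime (n ^ d) a"
    using cong_imp_coprime[OF cong_sym[OF divisor_cong[OF dvd_refl]]] by simp
  with \<open>odd d\<close> have "coprime n a"
    by auto
  have "a * x * y \<noteq> n * (x + y)" if xy: "x > 0" "y > 0" for x y
  proof
    assume eq: "a * x * y = n * (x + y)"
    obtain X Y where "X dvd n" and "Y dvd n" and "a dvd X + Y"
      by (rule unit_fraction_sum_divisors[OF xy eq \<open>coprime n a\<close>])
    then show False
      using not_dvd_sum_if_odd_power_cong_1[OF \<open>odd d\<close> \<open>a > 2\<close>] divisor_cong by blast
  qed
  then have "R n a = 0"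
    using \<open>n > 0\<close> by (intro R_eq_0I)
  then show "n \<in> Estar a"
    using \<open>n > 0\<close> \<open>coprime n a\<close> by (simp add: Estar_def)
qed

end
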